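(* Let $I\subset\mathbb{R}$ be an interval and let $M,N\colon I^2\to I$ be means. Let $\mathcal{A}_{M,N}$ be the set of all $(x,y)\in I^2$ such that the sequence $\big((M_n,N_n)(x,y)\big)_{n=1}^\infty$ converges to a point of the diagonal $\{(t,t)\colon t\in I\}$. Then $\mathcal{A}_{M,N}$ is a maximal subset of $I^2$ on which all $(M,N)$-invariant means are equal to each other; that is, any two $(M,N)$-invariant means coincide at every point of $\mathcal{A}_{M,N}$, and for every $(x,y)\in I^2\setminus\mathcal{A}_{M,N}$ there exist two $(M,N)$-invariant means taking different values at $(x,y)$.
   Context: A function $K\colon I^2\to\mathbb{R}$ is a mean in $I$ if $\min(x,y)\le K(x,y)\le\max(x,y)$ for all $x,y\in I$. For means $M,N\colon I^2\to I$, $(M_n,N_n):=(M,N)^n$ denotes the $n$-th iterate of the map $(x,y)\mapsto(M(x,y),N(x,y))$. A mean $K\colon I^2\to I$ is $(M,N)$-invariant if $K(M(x,y),N(x,y))=K(x,y)$ for all $x,y\in I$. *)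

theory Defs
  imports "HOL-Analysis.Analysis"
begin

definition is_mean :: "real set \<Rightarrow> (real \<Rightarrow> real \<Rightarrow> real) \<Rightarrow> bool" where
  "is_mean I K \<longleftrightarrow> (\<forall>x\<in>I. \<forall>y\<in>I. min x y \<le> K x y \<and> K x y \<le> max x y)"

definition MN_iter :: "(real \<Rightarrow> real \<Rightarrow> real) \<Rightarrow> (real \<Rightarrow> real \<Rightarrow> real) \<Rightarrow> nat \<Rightarrow> real \<times> real \<Rightarrow> real \<times> real" where
  "MN_iter M N n = ((\<lambda>(x, y). (M x y, N x y)) ^^ n)"

definition invariant_mean :: "real set \<Rightarrow> (real \<Rightarrow> real \<Rightarrow> real) \<Rightarrow> (real \<Rightarrow> real \<Rightarrow> real) \<Rightarrow> (real \<Rightarrow> real \<Rightarrow> real) \<Rightarrow> bool" where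
  "invariant_mean I M N K \<longleftrightarrow> is_mean I K \<and> (\<forall>x\<in>I. \<forall>y\<in>I. K x y \<in> I) \<and>
     (\<forall>x\<in>I. \<forall>y\<in>I. K (M x y) (N x y) = K x y)"

definition conv_set :: "real set \<Rightarrow> (real \<Rightarrow> real \<Rightarrow> real) \<Rightarrow> (real \<Rightarrow> real \<Rightarrow> real) \<Rightarrow> (real \<times> real) set" where
  "conv_set I M N = {(x, y). x \<in> I \<and> y \<in> I \<and>
     (\<exists>t\<in>I. (\<lambda>n. MN_iter M N n (x, y)) \<longlonglongrightarrow> (t, t))}"

end

theory Submission
  imports Defs
begin

text \<open>Along the orbit of (x, y) the smaller coordinate never decreases and the larger one never
increases, so they converge to limits lower_lim x y \<le> upper_lim x y. An invariant mean is constant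
along the orbit and lies between the two coordinates, hence between these limits; conversely both
limits are themselves invariant means. They agree exactly on conv_set, so there all invariant means
coincide, while at any other point lower_lim and upper_lim are two invariant means that differ.\<close>

lemma MN_iter_0 [simp]: "MN_iter M N 0 p = p"
  unfolding MN_iter_def by simp

lemma MN_iter_Suc:
  "MN_iter M N (Suc n) p = (M (fst (MN_iter M N n p)) (snd (MN_iter M N n p)),
                            N (fst (MN_iter M N n p)) (snd (MN_iter M N n p)))"
  unfolding MN_iter_def by (simp add: case_prod_beta)

lemma MN_iter_Suc_shift: "MN_iter M N (Suc n) (x, y) = MN_iter M N n (M x y, N x y)"
  unfolding MN_iter_def by (simp add: funpow_Suc_right del: funpow.simps)

lemma MN_iter_in:
  assumes "\<forall>x\<in>I. \<forall>y\<in>I. M x y \<in> I \<and> N x y \<in> I" "x \<in> I" "y \<in> I"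
  shows "fst (MN_iter M N n (x, y)) \<in> I \<and> snd (MN_iter M N n (x, y)) \<in> I"
  by (induction n) (use assms in \<open>auto simp: MN_iter_Suc\<close>)

lemma is_meanD: "is_mean I K \<Longrightarrow> x \<in> I \<Longrightarrow> y \<in> I \<Longrightarrow> min x y \<le> K x y \<and> K x y \<le> max x y"
  unfolding is_mean_def by blast

locale mean_iteration =
  fixes I :: "real set" and M N :: "real \<Rightarrow> real \<Rightarrow> real"
  assumes mean_M: "is_mean I M" and mean_N: "is_mean I N"
    and closed: "\<forall>x\<in>I. \<forall>y\<in>I. M x y \<in> I \<and> N x y \<in> I"
begin

definition orbit_min :: "real \<Rightarrow> real \<Rightarrow> nat \<Rightarrow> real" where
  "orbit_min x y n = min (fst (MN_iter M N n (x, y))) (snd (MN_iter M N n (x, y)))"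

definition orbit_max :: "real \<Rightarrow> real \<Rightarrow> nat \<Rightarrow> real" where
  "orbit_max x y n = max (fst (MN_iter M N n (x, y))) (snd (MN_iter M N n (x, y)))"

definition lower_lim :: "real \<Rightarrow> real \<Rightarrow> real" where
  "lower_lim x y = (SUP n. orbit_min x y n)"

definition upper_lim :: "real \<Rightarrow> real \<Rightarrow> real" where
  "upper_lim x y = (INF n. orbit_max x y n)"

lemma orbit_min_0 [simp]: "orbit_min x y 0 = min x y"
  and orbit_max_0 [simp]: "orbit_max x y 0 = max x y"
  unfolding orbit_min_def orbit_max_def by simp_all

lemma orbit_min_shift: "orbit_min (M x y) (N x y) = (\<lambda>n. orbit_min x y (Suc n))"
  and orbit_max_shift: "orbit_max (M x y) (N x y) = (\<lambda>n. orbit_max x y (Suc n))"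
  unfolding orbit_min_def orbit_max_def by (simp_all only: MN_iter_Suc_shift)

context
  fixes x y assumes xI: "x \<in> I" and yI: "y \<in> I"
begin

lemma orbit_mono: "incseq (orbit_min x y)" "decseq (orbit_max x y)"
proof -
  have "orbit_min x y n \<le> orbit_min x y (Suc n) \<and> orbit_max x y (Suc n) \<le> orbit_max x y n" for n
  proof -
    let ?a = "fst (MN_iter M N n (x, y))" and ?b = "snd (MN_iter M N n (x, y))"
    have "?a \<in> I" "?b \<in> I" using MN_iter_in[OF closed xI yI] by blast+
    then have "min ?a ?b \<le> M ?a ?b \<and> M ?a ?b \<le> max ?a ?b" "min ?a ?b \<le> N ?a ?b \<and> N ?a ?b \<le> max ?a ?b"
      using is_meanD mean_M mean_N by blast+
    then show ?thesis unfolding orbit_min_def orbit_max_def MN_iter_Suc by simp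
  qed
  then show "incseq (orbit_min x y)" "decseq (orbit_max x y)"
    by (auto intro: incseq_SucI decseq_SucI)
qed

lemma orbit_min_le_orbit_max: "orbit_min x y n \<le> orbit_max x y k"
proof -
  have "orbit_min x y n \<le> orbit_min x y (max n k)" using orbit_mono(1) by (simp add: incseq_def)
  also have "\<dots> \<le> orbit_max x y (max n k)" by (simp add: orbit_min_def orbit_max_def)
  also have "\<dots> \<le> orbit_max x y k" using orbit_mono(2) by (simp add: decseq_def)
  finally show ?thesis .
qed

lemma orbit_min_tendsto: "orbit_min x y \<longlonglongrightarrow> lower_lim x y"
  unfolding lower_lim_def
  by (rule LIMSEQ_incseq_SUP[OF _ orbit_mono(1)]) (meson bdd_aboveI2 orbit_min_le_orbit_max)

lemma orbit_max_tendsto: "orbit_max x y \<longlonglongrightarrow> upper_lim x y"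
  unfolding upper_lim_def
  by (rule LIMSEQ_decseq_INF[OF _ orbit_mono(2)]) (meson bdd_belowI2 orbit_min_le_orbit_max)

lemma min_le_lower_lim: "min x y \<le> lower_lim x y"
  using incseq_le[OF orbit_mono(1) orbit_min_tendsto, of 0] by simp

lemma lower_lim_le_upper_lim: "lower_lim x y \<le> upper_lim x y"
  using LIMSEQ_le[OF orbit_min_tendsto orbit_max_tendsto] orbit_min_le_orbit_max by blast

lemma upper_lim_le_max: "upper_lim x y \<le> max x y"
  using decseq_ge[OF orbit_mono(2) orbit_max_tendsto, of 0] by simp

lemma invariant_mean_MN_iter:
  assumes "invariant_mean I M N K"
  shows "K (fst (MN_iter M N n (x, y))) (snd (MN_iter M N n (x, y))) = K x y"
proof (induction n)
  case (Suc n)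
  have "fst (MN_iter M N n (x, y)) \<in> I \<and> snd (MN_iter M N n (x, y)) \<in> I"
    using MN_iter_in[OF closed xI yI] by blast
  with assms Suc show ?case unfolding invariant_mean_def by (simp add: MN_iter_Suc)
qed simp

lemma invariant_mean_between_lims:
  assumes K: "invariant_mean I M N K"
  shows "lower_lim x y \<le> K x y \<and> K x y \<le> upper_lim x y"
proof -
  have "is_mean I K" using K unfolding invariant_mean_def by blast
  then have "orbit_min x y n \<le> K x y \<and> K x y \<le> orbit_max x y n" for n
    using is_meanD MN_iter_in[OF closed xI yI] invariant_mean_MN_iter[OF K, of n]
    unfolding orbit_min_def orbit_max_def by metis
  then show ?thesis
    using LIMSEQ_le_const2[OF orbit_min_tendsto] LIMSEQ_le_const[OF orbit_max_tendsto] by blast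
qed

end

lemma lower_lim_invariant: "lower_lim (M x y) (N x y) = lower_lim x y"
  and upper_lim_invariant: "upper_lim (M x y) (N x y) = upper_lim x y"
  if "x \<in> I" "y \<in> I"
proof -
  have MN: "M x y \<in> I" "N x y \<in> I" using closed that by blast+
  have "orbit_min (M x y) (N x y) \<longlonglongrightarrow> lower_lim x y"
    unfolding orbit_min_shift by (rule LIMSEQ_Suc[OF orbit_min_tendsto[OF that]])
  then show "lower_lim (M x y) (N x y) = lower_lim x y"
    by (rule LIMSEQ_unique[OF orbit_min_tendsto[OF MN]])
  have "orbit_max (M x y) (N x y) \<longlonglongrightarrow> upper_lim x y"
    unfolding orbit_max_shift by (rule LIMSEQ_Suc[OF orbit_max_tendsto[OF that]])
  then show "upper_lim (M x y) (N x y) = upper_lim x y"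
    by (rule LIMSEQ_unique[OF orbit_max_tendsto[OF MN]])
qed

context
  assumes interval: "is_interval I"
begin

lemma between_min_max_in_I:
  assumes "x \<in> I" "y \<in> I" "min x y \<le> z" "z \<le> max x y"
  shows "z \<in> I"
proof -
  have "min x y \<in> I" "max x y \<in> I" using assms(1,2) by (simp_all add: min_def max_def)
  then show ?thesis using mem_is_interval_1_I[OF interval] assms(3,4) by blast
qed

lemma invariant_mean_if_between_lims:
  assumes "\<And>x y. x \<in> I \<Longrightarrow> y \<in> I \<Longrightarrow>
      lower_lim x y \<le> K x y \<and> K x y \<le> upper_lim x y \<and> K (M x y) (N x y) = K x y"
  shows "invariant_mean I M N K"
proof -
  have "min x y \<le> K x y \<and> K x y \<le> max x y \<and> K x y \<in> I" if "x \<in> I" "y \<in> I" for x y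
    using assms[OF that] min_le_lower_lim[OF that] upper_lim_le_max[OF that]
      between_min_max_in_I[OF that, of "K x y"] by auto
  with assms show ?thesis unfolding invariant_mean_def is_mean_def by blast
qed

lemma invariant_mean_lower_lim: "invariant_mean I M N lower_lim"
  and invariant_mean_upper_lim: "invariant_mean I M N upper_lim"
  by (auto intro!: invariant_mean_if_between_lims
      simp: lower_lim_le_upper_lim lower_lim_invariant upper_lim_invariant)

lemma conv_set_iff_lims_eq:
  assumes xI: "x \<in> I" and yI: "y \<in> I"
  shows "(x, y) \<in> conv_set I M N \<longleftrightarrow> lower_lim x y = upper_lim x y"
proof
  assume "(x, y) \<in> conv_set I M N"
  then obtain t where "(\<lambda>n. MN_iter M N n (x, y)) \<longlonglongrightarrow> (t, t)"
    unfolding conv_set_def by blast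
  then have "(\<lambda>n. fst (MN_iter M N n (x, y))) \<longlonglongrightarrow> t" "(\<lambda>n. snd (MN_iter M N n (x, y))) \<longlonglongrightarrow> t"
    using tendsto_fst tendsto_snd by fastforce+
  then have "orbit_min x y \<longlonglongrightarrow> t" "orbit_max x y \<longlonglongrightarrow> t"
    unfolding orbit_min_def[abs_def] orbit_max_def[abs_def]
    using tendsto_min tendsto_max by fastforce+
  then show "lower_lim x y = upper_lim x y"
    using LIMSEQ_unique orbit_min_tendsto[OF xI yI] orbit_max_tendsto[OF xI yI] by metis
next
  let ?t = "lower_lim x y"
  assume "lower_lim x y = upper_lim x y"
  then have lims: "orbit_min x y \<longlonglongrightarrow> ?t" "orbit_max x y \<longlonglongrightarrow> ?t"
    using orbit_min_tendsto[OF xI yI] orbit_max_tendsto[OF xI yI] by simp_all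
  have "(\<lambda>n. fst (MN_iter M N n (x, y))) \<longlonglongrightarrow> ?t" "(\<lambda>n. snd (MN_iter M N n (x, y))) \<longlonglongrightarrow> ?t"
    by (rule tendsto_sandwich[OF _ _ lims]; simp add: orbit_min_def orbit_max_def)+
  then have "(\<lambda>n. MN_iter M N n (x, y)) \<longlonglongrightarrow> (?t, ?t)"
    using tendsto_Pair by fastforce
  moreover have "?t \<in> I"
    using between_min_max_in_I[OF xI yI] min_le_lower_lim[OF xI yI]
      lower_lim_le_upper_lim[OF xI yI] upper_lim_le_max[OF xI yI] by simp
  ultimately show "(x, y) \<in> conv_set I M N"
    unfolding conv_set_def using xI yI by blast
qed

end

end

theorem mainTheorem3:
  fixes I :: "real set" and M N :: "real \<Rightarrow> real \<Rightarrow> real"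
  assumes "is_interval I"
    and "is_mean I M" and "is_mean I N"
    and "\<forall>x\<in>I. \<forall>y\<in>I. M x y \<in> I \<and> N x y \<in> I"
  shows "(\<forall>K1 K2. invariant_mean I M N K1 \<and> invariant_mean I M N K2 \<longrightarrow>
            (\<forall>(x, y)\<in>conv_set I M N. K1 x y = K2 x y))
       \<and> (\<forall>x\<in>I. \<forall>y\<in>I. (x, y) \<notin> conv_set I M N \<longrightarrow>
            (\<exists>K1 K2. invariant_mean I M N K1 \<and> invariant_mean I M N K2 \<and> K1 x y \<noteq> K2 x y))"
proof -
  interpret mean_iteration I M N
    using assms(2-4) by unfold_locales
  have "K1 x y = K2 x y"
    if "invariant_mean I M N K1" "invariant_mean I M N K2" "(x, y) \<in> conv_set I M N" for K1 K2 x y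
  proof -
    have xy: "x \<in> I" "y \<in> I" using that(3) unfolding conv_set_def by simp_all
    then have "lower_lim x y = upper_lim x y" using that(3) conv_set_iff_lims_eq[OF assms(1)] by blast
    then show ?thesis
      using invariant_mean_between_lims[OF xy that(1)] invariant_mean_between_lims[OF xy that(2)]
      by linarith
  qed
  moreover have "lower_lim x y \<noteq> upper_lim x y"
    if "x \<in> I" "y \<in> I" "(x, y) \<notin> conv_set I M N" for x y
    using that conv_set_iff_lims_eq[OF assms(1)] by blast
  ultimately show ?thesis
    using invariant_mean_lower_lim[OF assms(1)] invariant_mean_upper_lim[OF assms(1)] by blast
qed

end
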